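(* Let $(J,\mu)$ be a standard Borel space with a finite Borel measure $\mu$, and let $\mathcal{I}$ be a family of Borel subsets of $J$ satisfying: (I0) $\mathcal{I}$ is closed under taking (Borel) subsets; (I1) if $I_1\subseteq I_2\subseteq\cdots$ with $I_n\in\mathcal{I}$ for all $n$, then $\bigcup_n I_n\in\mathcal{I}$; (I2) for all $I_1,I_2\in\mathcal{I}$ with $\mu(I_1)<\mu(I_2)$ there exists $I_3\in\mathcal{I}$ with $I_1\subseteq I_3\subseteq I_1\cup I_2$ and $\mu(I_3)>\mu(I_1)$. Define $r(A)=\sup\{\mu(I): I\in\mathcal{I},\ I\subseteq A\}$ for Borel $A\subseteq J$. Then $r$ is submodular: $r(A)+r(B)\ge r(A\cap B)+r(A\cup B)$ for all Borel $A,B\subseteq J$. *)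

theory Defs
  imports "HOL-Analysis.Analysis"
begin

text \<open>Rank function of a family of independent sets: r(A) = sup of mu(I) over I in the family with I a subset of A.
  Values in ennreal so that the supremum over an empty family is 0.\<close>
definition rank_fn :: "'a measure \<Rightarrow> 'a set set \<Rightarrow> 'a set \<Rightarrow> ennreal" where
  "rank_fn M \<I> A = (SUP I \<in> {I \<in> \<I>. I \<subseteq> A}. emeasure M I)"

end

theory Submission
  imports Defs
begin

text \<open>By an exhaustion argument (a measure-theoretic substitute for Zorn's lemma, using (I1)
  and finiteness of \<open>\<mu>\<close>), every independent subset of \<open>A\<close> extends to an independent subset of \<open>A\<close>
  that cannot be enlarged within \<open>A\<close> to one of larger measure; by (I2) such a set attains \<open>r(A)\<close>.
  Submodularity then follows as for matroids: take \<open>I \<subseteq> A \<inter> B\<close> attaining \<open>r(A \<inter> B)\<close>, extend it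
  to \<open>J \<subseteq> A \<union> B\<close> attaining \<open>r(A \<union> B)\<close>; by (I0) the sets \<open>J \<inter> A\<close> and \<open>J \<inter> B\<close> are independent, and
  \<open>\<mu>(J \<inter> A) + \<mu>(J \<inter> B) = \<mu>(J) + \<mu>(J \<inter> A \<inter> B) \<ge> r(A \<union> B) + r(A \<inter> B)\<close>.\<close>

lemma exists_measure_maximal_superset:
  fixes M :: "'a measure" and \<C> :: "'a set set"
  assumes "finite_measure M" and "\<C> \<subseteq> sets M"
    and incseq_Union: "\<And>F. incseq F \<Longrightarrow> (\<And>n. F n \<in> \<C>) \<Longrightarrow> (\<Union>n. F n) \<in> \<C>"
    and "I \<in> \<C>"
  shows "\<exists>J\<in>\<C>. I \<subseteq> J \<and> (\<forall>K\<in>\<C>. J \<subseteq> K \<longrightarrow> measure M K \<le> measure M J)"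
proof -
  interpret finite_measure M by fact
  define s where "s X = (SUP K \<in> {K \<in> \<C>. X \<subseteq> K}. measure M K)" for X
  have bdd: "bdd_above (measure M ` {K \<in> \<C>. X \<subseteq> K})" for X
    by (rule bdd_aboveI2[where M = "measure M (space M)"]) (rule bounded_measure)
  have le_s: "measure M K \<le> s X" if "K \<in> \<C>" "X \<subseteq> K" for K X
    unfolding s_def using that by (intro cSup_upper bdd) auto
  have near_s: "\<exists>Y. (Y \<in> \<C> \<and> I \<subseteq> Y) \<and> X \<subseteq> Y \<and> s X - 1 / Suc n < measure M Y"
    if "X \<in> \<C> \<and> I \<subseteq> X" for X n
  proof -
    have "measure M ` {K \<in> \<C>. X \<subseteq> K} \<noteq> {}" using that by blast
    moreover have "s X - 1 / Suc n < s X" by simp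
    ultimately obtain Y where "Y \<in> \<C>" "X \<subseteq> Y" "s X - 1 / Suc n < measure M Y"
      unfolding s_def using less_cSup_iff[OF _ bdd] by blast
    with that show ?thesis by blast
  qed
  have "\<exists>F. \<forall>n. (F n \<in> \<C> \<and> I \<subseteq> F n) \<and>
      F n \<subseteq> F (Suc n) \<and> s (F n) - 1 / Suc n < measure M (F (Suc n))"
  proof (rule dependent_nat_choice)
    show "\<exists>X. X \<in> \<C> \<and> I \<subseteq> X" using \<open>I \<in> \<C>\<close> by blast
  qed (fact near_s)
  then obtain F where F: "\<And>n. F n \<in> \<C> \<and> I \<subseteq> F n"
    and F_Suc: "\<And>n. F n \<subseteq> F (Suc n) \<and> s (F n) - 1 / Suc n < measure M (F (Suc n))"
    by blast
  define J where "J = (\<Union>n. F n)"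
  have "incseq F" using F_Suc by (blast intro: incseq_SucI)
  then have "J \<in> \<C>" unfolding J_def using F by (blast intro: incseq_Union)
  then have "J \<in> sets M" using \<open>\<C> \<subseteq> sets M\<close> by blast
  have "measure M K \<le> measure M J" if "K \<in> \<C>" "J \<subseteq> K" for K
  proof (rule ccontr)
    assume "\<not> ?thesis"
    then obtain n where n: "1 / Suc n < measure M K - measure M J"
      using reals_Archimedean by (metis diff_gt_0_iff_gt inverse_eq_divide not_le)
    have "measure M K \<le> s (F n)" using that by (intro le_s) (auto simp: J_def)
    also have "\<dots> < measure M (F (Suc n)) + 1 / Suc n" using F_Suc[of n] by simp
    also have "measure M (F (Suc n)) \<le> measure M J"
      using \<open>J \<in> sets M\<close> by (intro finite_measure_mono) (auto simp: J_def)
    finally show False using n by simp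
  qed
  moreover have "I \<subseteq> J" using F by (auto simp: J_def)
  ultimately show ?thesis using \<open>J \<in> \<C>\<close> by blast
qed

lemma rank_fn_upper: "I \<in> \<I> \<Longrightarrow> I \<subseteq> A \<Longrightarrow> emeasure M I \<le> rank_fn M \<I> A"
  unfolding rank_fn_def by (intro SUP_upper) auto

lemma rank_fn_attained:
  fixes M :: "'a measure" and \<I> :: "'a set set"
  assumes fin: "finite_measure M" and "\<I> \<subseteq> sets M"
    and I1: "\<And>F. incseq F \<Longrightarrow> (\<And>n. F n \<in> \<I>) \<Longrightarrow> (\<Union>n. F n) \<in> \<I>"
    and I2: "\<And>I1 I2. I1 \<in> \<I> \<Longrightarrow> I2 \<in> \<I> \<Longrightarrow> emeasure M I1 < emeasure M I2 \<Longrightarrow>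
               \<exists>I3 \<in> \<I>. I1 \<subseteq> I3 \<and> I3 \<subseteq> I1 \<union> I2 \<and> emeasure M I3 > emeasure M I1"
    and "I \<in> \<I>" "I \<subseteq> A"
  shows "\<exists>J\<in>\<I>. I \<subseteq> J \<and> J \<subseteq> A \<and> emeasure M J = rank_fn M \<I> A"
proof -
  interpret finite_measure M by fact
  have "{J \<in> \<I>. J \<subseteq> A} \<subseteq> sets M" using \<open>\<I> \<subseteq> sets M\<close> by blast
  moreover have "incseq F \<Longrightarrow> (\<And>n. F n \<in> {J \<in> \<I>. J \<subseteq> A}) \<Longrightarrow> (\<Union>n. F n) \<in> {J \<in> \<I>. J \<subseteq> A}"
    for F using I1 by blast
  moreover have "I \<in> {J \<in> \<I>. J \<subseteq> A}" using \<open>I \<in> \<I>\<close> \<open>I \<subseteq> A\<close> by blast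
  ultimately obtain J where J: "J \<in> \<I>" "I \<subseteq> J" "J \<subseteq> A"
    and max: "\<And>K. K \<in> \<I> \<Longrightarrow> K \<subseteq> A \<Longrightarrow> J \<subseteq> K \<Longrightarrow> measure M K \<le> measure M J"
    using exists_measure_maximal_superset[OF fin] by (metis (no_types, lifting) mem_Collect_eq)
  have "emeasure M K \<le> emeasure M J" if K: "K \<in> \<I>" "K \<subseteq> A" for K
  proof (rule ccontr)
    assume "\<not> ?thesis"
    then obtain I3 where I3: "I3 \<in> \<I>" "J \<subseteq> I3" "I3 \<subseteq> J \<union> K" "emeasure M J < emeasure M I3"
      using I2[OF \<open>J \<in> \<I>\<close> \<open>K \<in> \<I>\<close>] by force
    have "measure M I3 \<le> measure M J" using I3 J K by (intro max) auto
    with I3 show False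
      by (simp add: emeasure_eq_measure ennreal_less_iff)
  qed
  then have "rank_fn M \<I> A \<le> emeasure M J" unfolding rank_fn_def by (intro SUP_least) auto
  with rank_fn_upper[OF J(1,3)] have "emeasure M J = rank_fn M \<I> A" by (rule antisym)
  with J show ?thesis by blast
qed

theorem lemma4p11:
  fixes M :: "('a :: polish_space) measure" and \<I> :: "'a set set"
  assumes borel_M: "sets M = sets borel"
    and fin: "finite_measure M"
    and I_borel: "\<I> \<subseteq> sets borel"
    and I0: "\<And>I J. I \<in> \<I> \<Longrightarrow> J \<in> sets borel \<Longrightarrow> J \<subseteq> I \<Longrightarrow> J \<in> \<I>"
    and I1: "\<And>F. incseq F \<Longrightarrow> (\<And>n. F n \<in> \<I>) \<Longrightarrow> (\<Union>n. F n) \<in> \<I>"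
    and I2: "\<And>I1 I2. I1 \<in> \<I> \<Longrightarrow> I2 \<in> \<I> \<Longrightarrow> emeasure M I1 < emeasure M I2 \<Longrightarrow>
               \<exists>I3 \<in> \<I>. I1 \<subseteq> I3 \<and> I3 \<subseteq> I1 \<union> I2 \<and> emeasure M I3 > emeasure M I1"
    and A: "A \<in> sets borel" and B: "B \<in> sets borel"
  shows "rank_fn M \<I> A + rank_fn M \<I> B \<ge> rank_fn M \<I> (A \<inter> B) + rank_fn M \<I> (A \<union> B)"
proof (cases "\<I> = {}")
  case True
  then show ?thesis by (simp add: rank_fn_def)
next
  case False
  then have "{} \<in> \<I>" using I0[of _ "{}"] by auto
  have I_sets: "\<I> \<subseteq> sets M" using I_borel borel_M by simp
  obtain I where I: "I \<in> \<I>" "I \<subseteq> A \<inter> B" "emeasure M I = rank_fn M \<I> (A \<inter> B)"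
    using rank_fn_attained[OF fin I_sets I1 I2 \<open>{} \<in> \<I>\<close>, of "A \<inter> B"] by auto
  obtain J where J: "J \<in> \<I>" "I \<subseteq> J" "J \<subseteq> A \<union> B" "emeasure M J = rank_fn M \<I> (A \<union> B)"
    using rank_fn_attained[OF fin I_sets I1 I2 I(1), of "A \<union> B"] I(2) by blast
  have "J \<in> sets borel" using J(1) I_borel by blast
  then have "J \<inter> A \<in> \<I>" "J \<inter> B \<in> \<I>" using I0[OF J(1)] A B by auto
  then have JA: "J \<inter> A \<in> sets M" and JB: "J \<inter> B \<in> sets M" using I_sets by blast+
  have "rank_fn M \<I> (A \<inter> B) + rank_fn M \<I> (A \<union> B) = emeasure M I + emeasure M J"
    using I(3) J(4) by simp
  also have "\<dots> \<le> emeasure M ((J \<inter> A) \<inter> (J \<inter> B)) + emeasure M ((J \<inter> A) \<union> (J \<inter> B))"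
    using I(2) J(2,3) JA JB by (intro add_mono emeasure_mono) auto
  also have "\<dots> = emeasure M (J \<inter> A) + emeasure M (J \<inter> B)"
    using emeasure_Un_Int[OF JA JB] by (simp add: add.commute)
  also have "\<dots> \<le> rank_fn M \<I> A + rank_fn M \<I> B"
    using \<open>J \<inter> A \<in> \<I>\<close> \<open>J \<inter> B \<in> \<I>\<close> by (intro add_mono rank_fn_upper) auto
  finally show ?thesis .
qed

end
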